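(* Let $X$ and $Y$ be complex Banach spaces with $Y$ continuously embedded in $X$, let $C\in L(X)$, let $B$ be a closed linear operator on $X$, let $A:\mathbb N_0\to L(Y,X)$, and let $k:\mathbb N_0\to\mathbb C$ with $k\neq0$. Let $(S(v))_{v\in\mathbb N_0}\subseteq L(X)$ be such that $S(v)Y\subseteq Y$ and $S(v)_{|Y}\in L(Y)$ for all $v\in\mathbb N_0$, and for all $v\in\mathbb N_0$ and $y\in Y$ one has $S(v)y\in D(B)$ and $$BS(v)y=k(v)Cy+\sum_{j=0}^{v}A(v-j)S(j)y .$$ Assume $\sum_{v=0}^{\infty}\|S(v)_{|Y}\|_{L(Y)}<\infty$ and $\sum_{v=0}^{\infty}\|(A\ast_0S)(v)\|_{L(Y,X)}<\infty$, where $(A\ast_0 S)(v)y:=\sum_{j=0}^{v}A(v-j)S(j)y$ for $y\in Y$. Suppose further that either (i) $f:\mathbb Z\to Y$ is bounded (in $Y$), $\sum_{v=0}^{\infty}|k(v)|<\infty$ and $\sum_{v=0}^{\infty}\|A(v)\|_{L(Y,X)}<\infty$; or (ii) $f\in l^1(\mathbb Z:Y)$, $k$ is bounded and $\sup_{v\ge0}\|A(v)\|_{L(Y,X)}<\infty$. Define $u(v):=\sum_{l=-\infty}^{v}S(v-l)f(l)$ for $v\in\mathbb Z$. Then $u$ is bounded, $u\in l^1(\mathbb Z:Y)$ provided that (ii) holds, $u(v)\in D(B)$ for all $v\in\mathbb Z$, and $$Bu(v)=\sum_{l=-\infty}^{v}k(v-l)Cf(l)+\sum_{l=-\infty}^{v}A(v-l)u(l),\quad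 v\in\mathbb Z .$$
   Context: $L(X)$, $L(Y)$, $L(Y,X)$ denote spaces of bounded linear operators with operator norms; $l^1(\mathbb Z:Y)$ is the space of summable $Y$-valued sequences on $\mathbb Z$. *)

theory Defs
  imports "HOL-Analysis.Analysis"
begin

text \<open>Complex Banach spaces: the library only has real normed spaces, so we add a
  complex scalar multiplication compatible with the real one and with the norm.\<close>

class cbanach = banach +
  fixes scaleC :: "complex \<Rightarrow> 'a \<Rightarrow> 'a"  (infixr \<open>*\<^sub>C\<close> 75)
  assumes scaleC_add_right: "a *\<^sub>C (x + y) = a *\<^sub>C x + a *\<^sub>C y"
    and scaleC_add_left: "(a + b) *\<^sub>C x = a *\<^sub>C x + b *\<^sub>C x"
    and scaleC_scaleC: "a *\<^sub>C (b *\<^sub>C x) = (a * b) *\<^sub>C x"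
    and scaleC_one: "1 *\<^sub>C x = x"
    and scaleR_scaleC: "r *\<^sub>R x = complex_of_real r *\<^sub>C x"
    and norm_scaleC: "norm (a *\<^sub>C x) = cmod a * norm x"

definition bounded_clinear :: "('a::cbanach \<Rightarrow> 'b::cbanach) \<Rightarrow> bool" where
  "bounded_clinear T \<longleftrightarrow> bounded_linear T \<and> (\<forall>c x. T (c *\<^sub>C x) = c *\<^sub>C T x)"

definition closed_operator :: "'a::cbanach set \<Rightarrow> ('a \<Rightarrow> 'a) \<Rightarrow> bool" where
  "closed_operator D B \<longleftrightarrow>
     0 \<in> D \<and> (\<forall>x\<in>D. \<forall>y\<in>D. x + y \<in> D \<and> B (x + y) = B x + B y)
     \<and> (\<forall>c. \<forall>x\<in>D. c *\<^sub>C x \<in> D \<and> B (c *\<^sub>C x) = c *\<^sub>C B x)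
     \<and> closed ((\<lambda>x. (x, B x)) ` D)"

end

theory Submission
  imports Defs
begin

(*
  Since f is bounded in either case and the norms of the restrictions S(j)|Y are summable,
  the series u(v) = \<Sum>j. S(j) f(v - j) converges absolutely and u is bounded; in case (ii)
  u is dominated by the convolution of two summable sequences, hence summable (Young).
  Applying B term by term, the hypothesis on B S(j) splits B u(v) into the series
  \<Sum>j. k(j) C f(v - j) and \<Sum>n. (A *0 S)(n) f(v - n). Both converge, so closedness of B
  gives u(v) \<in> D(B). The second series is the sum of the absolutely summable double family
  A(j) S(i) f(v - j - i) along the anti-diagonals j + i = n; summing the same family along
  its rows instead yields \<Sum>j. A(j) u(v - j).
*)

lemma closed_operator_sums:
  assumes B: "closed_operator D B" and x_D: "\<And>n. x n \<in> D"
    and x_sums: "x sums a" and Bx_sums: "(\<lambda>n. B (x n)) sums b"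
  shows "a \<in> D" and "B a = b"
proof -
  have D0: "0 \<in> D" and D_add: "\<And>p q. p \<in> D \<Longrightarrow> q \<in> D \<Longrightarrow> p + q \<in> D \<and> B (p + q) = B p + B q"
    and graph_closed: "closed ((\<lambda>x. (x, B x)) ` D)"
    using B unfolding closed_operator_def by auto
  have "B 0 = 0"
    using D_add[OF D0 D0] by (metis add_0 add_cancel_right_right)
  have partial_sums: "sum x {..<n} \<in> D \<and> B (sum x {..<n}) = (\<Sum>j<n. B (x j))" for n
  proof (induction n)
    case 0
    show ?case using D0 \<open>B 0 = 0\<close> by simp
  next
    case (Suc n)
    then show ?case using D_add[of "sum x {..<n}" "x n"] x_D by simp
  qed
  have lim: "(\<lambda>n. (sum x {..<n}, B (sum x {..<n}))) \<longlonglongrightarrow> (a, b)"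
    using x_sums Bx_sums partial_sums unfolding sums_def by (simp add: tendsto_Pair)
  have graph: "(sum x {..<n}, B (sum x {..<n})) \<in> (\<lambda>x. (x, B x)) ` D" for n
    using partial_sums by (auto intro!: image_eqI[where x="sum x {..<n}"])
  have "(a, b) \<in> (\<lambda>x. (x, B x)) ` D"
    using closed_sequentially[OF graph_closed _ lim] graph by blast
  then show "a \<in> D" and "B a = b" by auto
qed

lemma summable_on_comp_inj:
  fixes f :: "'a \<Rightarrow> 'b::banach"
  assumes "f summable_on UNIV" and "inj g"
  shows "(\<lambda>x. f (g x)) summable_on UNIV"
  using summable_on_reindex[OF \<open>inj g\<close>, of f] summable_on_subset_banach[OF assms(1)]
  by (simp add: o_def)

lemma summable_on_product_nonneg:
  fixes a :: "'i \<Rightarrow> real" and b :: "'j \<Rightarrow> real"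
  assumes "a summable_on I" "b summable_on K" "\<And>i. i \<in> I \<Longrightarrow> 0 \<le> a i" "\<And>j. j \<in> K \<Longrightarrow> 0 \<le> b j"
  shows "(\<lambda>(i, j). a i * b j) summable_on I \<times> K"
proof (rule summable_on_SigmaI)
  show "((\<lambda>j. case (i, j) of (i, j) \<Rightarrow> a i * b j) has_sum a i * infsum b K) K" for i
    using has_sum_cmult_right[OF has_sum_infsum[OF assms(2)]] by simp
  show "(\<lambda>i. a i * infsum b K) summable_on I"
    using summable_on_cmult_left[OF assms(1)] .
qed (use assms in auto)

lemma summable_on_mult_bounded:
  fixes x y :: "'i \<Rightarrow> real"
  assumes x: "x summable_on I" "\<And>i. i \<in> I \<Longrightarrow> 0 \<le> x i"
    and y: "bdd_above (y ` I)" "\<And>i. i \<in> I \<Longrightarrow> 0 \<le> y i"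
  shows "(\<lambda>i. x i * y i) summable_on I"
proof -
  obtain K where K: "\<And>i. i \<in> I \<Longrightarrow> y i \<le> K"
    using y(1) by (auto simp: bdd_above_def)
  show ?thesis
    by (rule summable_on_comparison_test[OF summable_on_cmult_left[OF x(1), of K]])
      (use x y K in \<open>auto intro: mult_left_mono\<close>)
qed

lemma summable_on_shifted_product:
  fixes a :: "nat \<Rightarrow> real" and b :: "int \<Rightarrow> real"
  assumes "summable a" "b summable_on UNIV" "\<And>i. 0 \<le> a i" "\<And>l. 0 \<le> b l"
  shows "(\<lambda>(v, i). a i * b (v - int i)) summable_on UNIV"
proof -
  have shift: "bij_betw (\<lambda>(v, i). (v - int i, i)) UNIV (UNIV :: (int \<times> nat) set)"
    by (rule bij_betwI[where g = "\<lambda>(l, i). (l + int i, i)"]) auto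
  have "(\<lambda>(l, i). b l * a i) summable_on UNIV \<times> UNIV"
    using assms by (intro summable_on_product_nonneg) (auto simp: summable_on_UNIV_nonneg_real_iff)
  then show ?thesis
    using summable_on_reindex_bij_betw[OF shift, of "\<lambda>(l, i). b l * a i"]
    by (simp add: case_prod_beta' mult.commute)
qed

lemma summable_on_convolution_int:
  fixes a :: "nat \<Rightarrow> real" and b :: "int \<Rightarrow> real"
  assumes "summable a" "b summable_on UNIV" "\<And>i. 0 \<le> a i" "\<And>l. 0 \<le> b l"
  shows "(\<lambda>v. \<Sum>i. a i * b (v - int i)) summable_on UNIV"
proof -
  have pairs: "(\<lambda>(v, i). a i * b (v - int i)) summable_on UNIV \<times> UNIV"
    using summable_on_shifted_product[OF assms] by simp
  have "(\<lambda>i. a i * b (v - int i)) summable_on UNIV" for v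
    using summable_on_SigmaD1[OF pairs] by simp
  then have "infsum (\<lambda>i. a i * b (v - int i)) UNIV = (\<Sum>i. a i * b (v - int i))" for v
    by (metis has_sum_imp_sums has_sum_infsum sums_unique)
  then show ?thesis
    using summable_on_Sigma_banach[OF pairs] by simp
qed

lemma bounded_range_if_norm_summable_on:
  fixes f :: "'a \<Rightarrow> 'b::real_normed_vector"
  assumes "(\<lambda>l. norm (f l)) summable_on UNIV"
  shows "bounded (range f)"
proof -
  have "norm (f l) \<le> infsum (\<lambda>l. norm (f l)) UNIV" for l
    using finite_sum_le_infsum[OF assms, of "{l}"] by simp
  then show ?thesis
    unfolding bounded_iff by blast
qed

lemma summable_norm_apply_bounded:
  fixes T :: "nat \<Rightarrow> 'a::real_normed_vector \<Rightarrow> 'b::banach"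
  assumes T: "\<And>j. bounded_linear (T j)" and sum_T: "summable (\<lambda>j. onorm (T j))"
    and x: "\<And>j. norm (x j) \<le> M"
  shows "summable (\<lambda>j. norm (T j (x j)))"
    and "norm (\<Sum>j. T j (x j)) \<le> (\<Sum>j. onorm (T j) * norm (x j))"
    and "(\<Sum>j. onorm (T j) * norm (x j)) \<le> (\<Sum>j. onorm (T j)) * M"
proof -
  have T_x: "norm (T j (x j)) \<le> onorm (T j) * norm (x j)" for j
    by (rule onorm[OF T])
  have Tx_M: "onorm (T j) * norm (x j) \<le> onorm (T j) * M" for j
    by (rule mult_left_mono[OF x onorm_pos_le[OF T]])
  have sum_TM: "summable (\<lambda>j. onorm (T j) * M)"
    using sum_T by (rule summable_mult2)
  have sum_Tx: "summable (\<lambda>j. onorm (T j) * norm (x j))"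
    by (rule summable_comparison_test'[OF sum_TM]) (use Tx_M onorm_pos_le[OF T] in auto)
  show sum_norm: "summable (\<lambda>j. norm (T j (x j)))"
    by (rule summable_comparison_test'[OF sum_Tx]) (use T_x in auto)
  have "norm (\<Sum>j. T j (x j)) \<le> (\<Sum>j. norm (T j (x j)))"
    by (rule summable_norm[OF sum_norm])
  also have "\<dots> \<le> (\<Sum>j. onorm (T j) * norm (x j))"
    by (rule suminf_le[OF T_x sum_norm sum_Tx])
  finally show "norm (\<Sum>j. T j (x j)) \<le> (\<Sum>j. onorm (T j) * norm (x j))" .
  have "(\<Sum>j. onorm (T j) * norm (x j)) \<le> (\<Sum>j. onorm (T j) * M)"
    by (rule suminf_le[OF Tx_M sum_Tx sum_TM])
  then show "(\<Sum>j. onorm (T j) * norm (x j)) \<le> (\<Sum>j. onorm (T j)) * M"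
    by (simp add: suminf_mult2[OF sum_T])
qed

lemma summable_on_norm_operator_convolution:
  fixes SY :: "nat \<Rightarrow> 'a::real_normed_vector \<Rightarrow> 'b::banach" and f :: "int \<Rightarrow> 'a"
  assumes SY: "\<And>j. bounded_linear (SY j)" and sum_SY: "summable (\<lambda>j. onorm (SY j))"
    and f: "(\<lambda>l. norm (f l)) summable_on UNIV"
  shows "(\<lambda>v. norm (\<Sum>j. SY j (f (v - int j)))) summable_on UNIV"
proof -
  obtain M where "\<And>l. norm (f l) \<le> M"
    using bounded_range_if_norm_summable_on[OF f] by (auto simp: bounded_iff)
  note estimate = summable_norm_apply_bounded(2)[where x = "\<lambda>j. f (v - int j)" for v, OF SY sum_SY this]
  have "(\<lambda>v. \<Sum>j. onorm (SY j) * norm (f (v - int j))) summable_on UNIV"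
    using summable_on_convolution_int[OF sum_SY f] onorm_pos_le[OF SY] by simp
  then show ?thesis
    by (rule summable_on_comparison_test) (use estimate in auto)
qed

lemma sums_rows_and_diagonals:
  fixes g :: "nat \<times> nat \<Rightarrow> 'a::banach"
  assumes g: "g summable_on UNIV"
  shows "(\<lambda>j. \<Sum>i. g (j, i)) sums infsum g UNIV"
    and "(\<lambda>n. \<Sum>i\<le>n. g (n - i, i)) sums infsum g UNIV"
proof -
  have "(\<lambda>i. g (j, i)) summable_on UNIV" for j
    using summable_on_comp_inj[OF g, of "Pair j"] by (simp add: inj_on_def)
  then have rows: "((\<lambda>i. g (j, i)) has_sum (\<Sum>i. g (j, i))) UNIV" for j
    by (metis has_sum_imp_sums has_sum_infsum sums_unique)
  show "(\<lambda>j. \<Sum>i. g (j, i)) sums infsum g UNIV"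
  proof (rule has_sum_imp_sums, rule has_sum_SigmaD[OF _ rows])
    show "(g has_sum infsum g UNIV) (UNIV \<times> UNIV)"
      using has_sum_infsum[OF g] by simp
  qed
  have diagonals: "bij_betw (\<lambda>(n, i). (n - i, i)) (SIGMA n:UNIV. {..n}) (UNIV :: (nat \<times> nat) set)"
    by (rule bij_betwI[where g = "\<lambda>(j, i). (j + i, i)"]) auto
  have "((\<lambda>p. g ((\<lambda>(n, i). (n - i, i)) p)) has_sum infsum g UNIV) (SIGMA n:UNIV. {..n})"
    by (subst has_sum_reindex_bij_betw[OF diagonals]) (rule has_sum_infsum[OF g])
  then show "(\<lambda>n. \<Sum>i\<le>n. g (n - i, i)) sums infsum g UNIV"
    by (intro has_sum_imp_sums, rule has_sum_SigmaD) (simp_all add: has_sum_finite)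
qed

lemma sums_operator_convolution:
  fixes A :: "nat \<Rightarrow> 'y::banach \<Rightarrow> 'x::banach" and SY :: "nat \<Rightarrow> 'y \<Rightarrow> 'y"
  assumes A: "\<And>j. bounded_linear (A j)" and SY: "\<And>i. bounded_linear (SY i)"
    and sum_SY: "summable (\<lambda>i. onorm (SY i))" and h: "\<And>n. norm (h n) \<le> M"
    and pairs: "(\<lambda>(j, i). onorm (A j) * (onorm (SY i) * norm (h (j + i)))) summable_on UNIV"
  shows "summable (\<lambda>j. A j (\<Sum>i. SY i (h (j + i))))"
    and "(\<lambda>n. \<Sum>i\<le>n. A (n - i) (SY i (h n))) sums (\<Sum>j. A j (\<Sum>i. SY i (h (j + i))))"
proof -
  define g where "g = (\<lambda>(j, i). A j (SY i (h (j + i))))"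
  have "norm (g (j, i)) \<le> onorm (A j) * (onorm (SY i) * norm (h (j + i)))" for j i
  proof -
    have "norm (g (j, i)) \<le> onorm (A j) * norm (SY i (h (j + i)))"
      unfolding g_def by (simp add: onorm[OF A])
    also have "\<dots> \<le> onorm (A j) * (onorm (SY i) * norm (h (j + i)))"
      by (rule mult_left_mono[OF onorm[OF SY] onorm_pos_le[OF A]])
    finally show ?thesis .
  qed
  then have "g summable_on UNIV"
    using abs_summable_summable Infinite_Sum.abs_summable_on_comparison_test'[OF pairs] by fastforce
  note g_sums = sums_rows_and_diagonals[OF this]
  have "(\<Sum>i. g (j, i)) = A j (\<Sum>i. SY i (h (j + i)))" for j
    using bounded_linear.suminf[OF A summable_norm_cancel[OF summable_norm_apply_bounded(1)[OF SY sum_SY h]]]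
    by (simp add: g_def)
  then have "(\<lambda>j. A j (\<Sum>i. SY i (h (j + i)))) sums infsum g UNIV"
    using g_sums(1) by simp
  moreover have "(\<lambda>n. \<Sum>i\<le>n. A (n - i) (SY i (h n))) sums infsum g UNIV"
    using g_sums(2) by (simp add: g_def)
  ultimately show "summable (\<lambda>j. A j (\<Sum>i. SY i (h (j + i))))"
    and "(\<lambda>n. \<Sum>i\<le>n. A (n - i) (SY i (h n))) sums (\<Sum>j. A j (\<Sum>i. SY i (h (j + i))))"
    by (auto simp: sums_iff)
qed

lemma closed_operator_apply_convolution:
  fixes J :: "'y::banach \<Rightarrow> 'x::cbanach" and A :: "nat \<Rightarrow> 'y \<Rightarrow> 'x" and SY :: "nat \<Rightarrow> 'y \<Rightarrow> 'y"
    and k :: "nat \<Rightarrow> complex" and h :: "nat \<Rightarrow> 'y"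
  assumes B: "closed_operator D B"
    and J: "bounded_linear J" and C: "bounded_linear C"
    and A: "\<And>j. bounded_linear (A j)" and SY: "\<And>j. bounded_linear (SY j)"
    and SY_D: "\<And>j y. J (SY j y) \<in> D"
    and B_SY: "\<And>j y. B (J (SY j y)) = k j *\<^sub>C C (J y) + (\<Sum>i\<le>j. A (j - i) (SY i y))"
    and sum_SY: "summable (\<lambda>j. onorm (SY j))"
    and h: "\<And>n. norm (h n) \<le> M"
    and k_h: "(\<lambda>j. cmod (k j) * norm (h j)) summable_on UNIV"
    and pairs: "(\<lambda>(j, i). onorm (A j) * (onorm (SY i) * norm (h (j + i)))) summable_on UNIV"
  shows "J (\<Sum>j. SY j (h j)) \<in> D"
    and "summable (\<lambda>j. k j *\<^sub>C C (J (h j)))"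
    and "summable (\<lambda>j. A j (\<Sum>i. SY i (h (j + i))))"
    and "B (J (\<Sum>j. SY j (h j))) = (\<Sum>j. k j *\<^sub>C C (J (h j))) + (\<Sum>j. A j (\<Sum>i. SY i (h (j + i))))"
proof -
  have "(\<lambda>j. SY j (h j)) sums (\<Sum>j. SY j (h j))"
    using summable_norm_apply_bounded(1)[OF SY sum_SY h] by (rule summable_sums[OF summable_norm_cancel])
  then have J_sums: "(\<lambda>j. J (SY j (h j))) sums J (\<Sum>j. SY j (h j))"
    by (rule bounded_linear.sums[OF J])
  have "norm (k j *\<^sub>C C (J (h j))) \<le> (onorm C * onorm J) * (cmod (k j) * norm (h j))" for j
  proof -
    have "norm (C (J (h j))) \<le> onorm C * norm (J (h j))"
      by (rule onorm[OF C])
    also have "\<dots> \<le> onorm C * (onorm J * norm (h j))"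
      by (rule mult_left_mono[OF onorm[OF J] onorm_pos_le[OF C]])
    finally show ?thesis
      unfolding norm_scaleC by (metis mult.left_commute mult.assoc mult_left_mono norm_ge_zero)
  qed
  moreover have "summable (\<lambda>j. (onorm C * onorm J) * (cmod (k j) * norm (h j)))"
    using k_h by (intro summable_mult) (simp add: summable_on_UNIV_nonneg_real_iff)
  ultimately show k_sum: "summable (\<lambda>j. k j *\<^sub>C C (J (h j)))"
    by (rule summable_comparison_test'[where N = 0, rotated])
  have "(\<lambda>j. B (J (SY j (h j)))) sums ((\<Sum>j. k j *\<^sub>C C (J (h j))) + (\<Sum>j. A j (\<Sum>i. SY i (h (j + i)))))"
    unfolding B_SY using summable_sums[OF k_sum] sums_operator_convolution(2)[OF A SY sum_SY h pairs]
    by (rule sums_add)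
  with J_sums show "J (\<Sum>j. SY j (h j)) \<in> D"
    and "B (J (\<Sum>j. SY j (h j))) = (\<Sum>j. k j *\<^sub>C C (J (h j))) + (\<Sum>j. A j (\<Sum>i. SY i (h (j + i))))"
    using closed_operator_sums[OF B SY_D] by simp_all
  show "summable (\<lambda>j. A j (\<Sum>i. SY i (h (j + i))))"
    by (rule sums_operator_convolution(1)[OF A SY sum_SY h pairs])
qed

(* \<kappa>, a, s, x play the roles of |k|, ||A(j)||, ||S(i)|Y|| and ||f||; the two disjuncts of
   the hypothesis are the cases (i) and (ii). *)
lemma convolution_majorants_summable:
  fixes \<kappa> a s :: "nat \<Rightarrow> real" and x :: "int \<Rightarrow> real"
  assumes data: "(bdd_above (range x) \<and> summable \<kappa> \<and> summable a)
      \<or> (x summable_on UNIV \<and> bdd_above (range \<kappa>) \<and> bdd_above (range a))"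
    and s: "summable s"
    and nonneg: "\<And>j. 0 \<le> \<kappa> j" "\<And>j. 0 \<le> a j" "\<And>i. 0 \<le> s i" "\<And>l. 0 \<le> x l"
  shows "(\<lambda>j. \<kappa> j * x (v - int j)) summable_on UNIV
      \<and> (\<lambda>(j, i). a j * (s i * x (v - int (j + i)))) summable_on UNIV"
  using data
proof (elim disjE conjE)
  assume x: "bdd_above (range x)" and \<kappa>: "summable \<kappa>" and a: "summable a"
  have x_bdd: "bdd_above (range (\<lambda>p. x (g p)))" for g :: "'a \<Rightarrow> int"
    using x by (rule bdd_above_mono) auto
  have "\<kappa> summable_on UNIV"
    using \<kappa> nonneg by (simp add: summable_on_UNIV_nonneg_real_iff)
  then have "(\<lambda>j. \<kappa> j * x (v - int j)) summable_on UNIV"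
    by (rule summable_on_mult_bounded) (use nonneg x_bdd in auto)
  moreover have "(\<lambda>(j, i). a j * s i) summable_on UNIV \<times> UNIV"
    using a s nonneg by (intro summable_on_product_nonneg) (auto simp: summable_on_UNIV_nonneg_real_iff)
  then have "(\<lambda>p. (case p of (j, i) \<Rightarrow> a j * s i) * x (v - int (fst p + snd p))) summable_on UNIV"
    by (intro summable_on_mult_bounded[OF _ _ x_bdd]) (use nonneg in auto)
  ultimately show ?thesis
    by (simp add: case_prod_unfold mult.assoc)
next
  assume x: "x summable_on UNIV" and \<kappa>: "bdd_above (range \<kappa>)" and a: "bdd_above (range a)"
  have "inj (\<lambda>j. v - int j)"
    by (simp add: inj_on_def)
  then have "(\<lambda>j. x (v - int j)) summable_on UNIV"
    by (rule summable_on_comp_inj[OF x])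
  then have "(\<lambda>j. x (v - int j) * \<kappa> j) summable_on UNIV"
    by (rule summable_on_mult_bounded) (use \<kappa> nonneg in auto)
  moreover have "inj (\<lambda>(j, i). (v - int j, i))"
    by (simp add: inj_on_def)
  then have "(\<lambda>p. (\<lambda>(w, i). s i * x (w - int i)) ((\<lambda>(j, i). (v - int j, i)) p)) summable_on UNIV"
    by (rule summable_on_comp_inj[OF summable_on_shifted_product[OF s x nonneg(3,4)]])
  then have "(\<lambda>p. (\<lambda>(w, i). s i * x (w - int i)) ((\<lambda>(j, i). (v - int j, i)) p) * a (fst p)) summable_on UNIV"
    by (rule summable_on_mult_bounded) (use a nonneg in \<open>auto intro: bdd_above_mono simp: split_beta\<close>)
  ultimately show ?thesis
    by (simp add: case_prod_unfold algebra_simps)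
qed

theorem theorem2p4:
  fixes J :: "'y::cbanach \<Rightarrow> 'x::cbanach"
    and C :: "'x \<Rightarrow> 'x" and B :: "'x \<Rightarrow> 'x" and D :: "'x set"
    and A :: "nat \<Rightarrow> 'y \<Rightarrow> 'x" and k :: "nat \<Rightarrow> complex"
    and S :: "nat \<Rightarrow> 'x \<Rightarrow> 'x" and SY :: "nat \<Rightarrow> 'y \<Rightarrow> 'y"
    and f :: "int \<Rightarrow> 'y" and u :: "int \<Rightarrow> 'y"
  assumes emb: "bounded_clinear J" "inj J"
    and C: "bounded_clinear C"
    and B: "closed_operator D B"
    and A: "\<forall>v. bounded_clinear (A v)"
    and k: "k \<noteq> (\<lambda>_. 0)"
    and S: "\<forall>v. bounded_clinear (S v)"
    and SY: "\<forall>v. bounded_clinear (SY v)" "\<forall>v y. S v (J y) = J (SY v y)"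
    and SD: "\<forall>v y. S v (J y) \<in> D"
    and eq: "\<forall>v y. B (S v (J y)) = k v *\<^sub>C C (J y) + (\<Sum>j\<le>v. A (v - j) (SY j y))"
    and sumS: "summable (\<lambda>v. onorm (SY v))"
    and sumAS: "summable (\<lambda>v. onorm (\<lambda>y. \<Sum>j\<le>v. A (v - j) (SY j y)))"
    and cases: "(bounded (range f) \<and> summable (\<lambda>v. norm (k v)) \<and> summable (\<lambda>v. onorm (A v)))
              \<or> ((\<lambda>l. norm (f l)) summable_on UNIV \<and> bounded (range k)
                 \<and> bdd_above (range (\<lambda>v. onorm (A v))))"
    and u_def: "u = (\<lambda>v. \<Sum>j. SY j (f (v - int j)))"
  shows "(\<forall>v. summable (\<lambda>j. SY j (f (v - int j))))
         \<and> bounded (range u)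
         \<and> (((\<lambda>l. norm (f l)) summable_on UNIV \<and> bounded (range k)
               \<and> bdd_above (range (\<lambda>v. onorm (A v))))
             \<longrightarrow> (\<lambda>v. norm (u v)) summable_on UNIV)
         \<and> (\<forall>v. J (u v) \<in> D)
         \<and> (\<forall>v. summable (\<lambda>j. k j *\<^sub>C C (J (f (v - int j))))
               \<and> summable (\<lambda>j. A j (u (v - int j)))
               \<and> B (J (u v)) = (\<Sum>j. k j *\<^sub>C C (J (f (v - int j)))) + (\<Sum>j. A j (u (v - int j))))"
proof -
  have J_lin: "bounded_linear J" and C_lin: "bounded_linear C"
    and A_lin: "\<And>j. bounded_linear (A j)" and SY_lin: "\<And>j. bounded_linear (SY j)"
    using emb(1) C A SY(1) unfolding bounded_clinear_def by auto
  obtain M where M: "\<And>l. norm (f l) \<le> M"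
    using cases bounded_range_if_norm_summable_on unfolding bounded_iff by blast
  have "(bdd_above (range (\<lambda>l. norm (f l))) \<and> summable (\<lambda>j. cmod (k j)) \<and> summable (\<lambda>j. onorm (A j)))
      \<or> ((\<lambda>l. norm (f l)) summable_on UNIV \<and> bdd_above (range (\<lambda>j. cmod (k j)))
          \<and> bdd_above (range (\<lambda>j. onorm (A j))))"
    using cases bdd_above_norm[of "range f"] bdd_above_norm[of "range k"] by (auto simp: image_image)
  note majorants = convolution_majorants_summable[OF this sumS norm_ge_zero
      onorm_pos_le[OF A_lin] onorm_pos_le[OF SY_lin] norm_ge_zero]
  have u_bound: "summable (\<lambda>j. norm (SY j (f (v - int j)))) \<and> norm (u v) \<le> (\<Sum>j. onorm (SY j)) * M" for v
    using summable_norm_apply_bounded[where x = "\<lambda>j. f (v - int j)", OF SY_lin sumS M]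
    unfolding u_def by (meson order_trans)
  have SY_D: "J (SY j y) \<in> D" and B_SY: "B (J (SY j y)) = k j *\<^sub>C C (J y) + (\<Sum>i\<le>j. A (j - i) (SY i y))" for j y
    using SD eq SY(2) by simp_all
  have u_at: "u v = (\<Sum>j. SY j (f (v - int j)))" for v
    by (simp add: u_def)
  have u_shift: "u (v - int j) = (\<Sum>i. SY i (f (v - int (j + i))))" for v j
    unfolding u_def by (simp add: algebra_simps)
  note conv = closed_operator_apply_convolution[where h = "\<lambda>n. f (v - int n)" for v,
      OF B J_lin C_lin A_lin SY_lin SY_D B_SY sumS M majorants[THEN conjunct1] majorants[THEN conjunct2],
      folded u_shift u_at]
  show ?thesis
  proof (intro conjI impI allI)
    show "summable (\<lambda>j. SY j (f (v - int j)))" for v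
      using u_bound by (blast intro: summable_norm_cancel)
    show "bounded (range u)"
      unfolding bounded_iff using u_bound by blast
  next
    assume "(\<lambda>l. norm (f l)) summable_on UNIV \<and> bounded (range k) \<and> bdd_above (range (\<lambda>v. onorm (A v)))"
    then show "(\<lambda>v. norm (u v)) summable_on UNIV"
      using summable_on_norm_operator_convolution[OF SY_lin sumS] unfolding u_def by blast
  qed (fact conv)+
qed

end
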